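(* Let $d\ge 1$ and $h\ge 1$ be integers and let $T$ be the complete $d$-ary tree of height $h$. For every integer $0\le l\le h$ and every vertex $x$ at distance $l$ from the root, the hitting time from $x$ to the root is $f_h(d)-f_{h-l}(d)$.
   Context: The complete $d$-ary tree of height $h$ is the rooted tree in which every vertex at depth less than $h$ has exactly $d$ children and every vertex at depth $h$ is a leaf. For nonnegative integers $n$, define the polynomial $f_0(d)=0$ and, for $n\ge 1$, $f_n(d)=\left(\sum_{i=0}^{n-1}(2n-2i)d^i\right)-n$. A simple random walk moves at each step to a uniformly random neighbor; the hitting time from $x$ to $y$ is the expected number of steps for a simple random walk started at $x$ to first reach $y$. *)

theory Defs
  imports "HOL-Probability.Probability"
begin

(* Complete d-ary tree of height h: vertices are words over {0..<d} of length \<le> h;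
   the root is [], the children of v are v @ [i] (i < d), depth of v = length v. *)
definition tree_verts :: "nat \<Rightarrow> nat \<Rightarrow> nat list set" where
  "tree_verts d h = {v. length v \<le> h \<and> (\<forall>i\<in>set v. i < d)}"

definition tree_adj :: "nat \<Rightarrow> nat \<Rightarrow> nat list \<Rightarrow> nat list \<Rightarrow> bool" where
  "tree_adj d h u v \<longleftrightarrow> u \<in> tree_verts d h \<and> v \<in> tree_verts d h \<and>
     ((\<exists>i. v = u @ [i]) \<or> (\<exists>i. u = v @ [i]))"

definition srw_step :: "('a \<Rightarrow> 'a \<Rightarrow> bool) \<Rightarrow> 'a \<Rightarrow> 'a pmf" where
  "srw_step E x = pmf_of_set {y. E x y}"

(* srw_avoid E r n x = P_x(X_0 \<noteq> r, ..., X_n \<noteq> r) = P_x(tau_r > n),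
   where tau_r is the first time the walk is at r. *)
primrec srw_avoid :: "('a \<Rightarrow> 'a \<Rightarrow> bool) \<Rightarrow> 'a \<Rightarrow> nat \<Rightarrow> 'a \<Rightarrow> real" where
  "srw_avoid E r 0 x = (if x = r then 0 else 1)"
| "srw_avoid E r (Suc n) x =
     (if x = r then 0 else measure_pmf.expectation (srw_step E x) (srw_avoid E r n))"

(* Hitting time E_x[tau_r] = \<Sum>_{n\<ge>0} P_x(tau_r > n) (possibly infinite). *)
definition hitting_time :: "('a \<Rightarrow> 'a \<Rightarrow> bool) \<Rightarrow> 'a \<Rightarrow> 'a \<Rightarrow> ennreal" where
  "hitting_time E x r = (\<Sum>n. ennreal (srw_avoid E r n x))"

definition f_poly :: "nat \<Rightarrow> real \<Rightarrow> real" where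
  "f_poly n d = (if n = 0 then 0
     else (\<Sum>i<n. (2 * real n - 2 * real i) * d ^ i) - real n)"

end

theory Submission
  imports Defs
begin

text \<open>
  The hitting time of \<open>r\<close> equals every solution \<open>0 \<le> g \<le> M\<close> of the first-step equations
  \<open>g r = 0\<close> and \<open>g x = 1 + (average of g over the neighbours of x)\<close>, since the gap between
  \<open>g x\<close> and the partial sums \<open>\<Sum>n<N. P\<^sub>x(\<tau> > n)\<close> stays between \<open>0\<close> and \<open>M \<cdot> P\<^sub>x(\<tau> > N)\<close>.
  On the tree, by symmetry, the solution only depends on the depth \<open>m\<close> of the vertex, and
  \<open>f_poly h d - f_poly (h - m) d\<close> satisfies the resulting equations because
  \<open>F k = f_poly k d\<close> obeys the recurrence \<open>F (k + 2) + d F k = (d + 1) (F (k + 1) + 1)\<close>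
  with \<open>F 0 = 0\<close> and \<open>F 1 = 1\<close>.
\<close>

lemma expectation_srw_step:
  assumes "finite {y. E x y}" "{y. E x y} \<noteq> {}"
  shows "measure_pmf.expectation (srw_step E x) f = (\<Sum>y\<in>{y. E x y}. f y) / card {y. E x y}"
  unfolding srw_step_def by (rule integral_pmf_of_set[OF assms(2,1)])

lemma srw_avoid_nonneg: "0 \<le> srw_avoid E r n x"
  by (induction n arbitrary: x) (auto intro: Bochner_Integration.integral_nonneg)

lemma srw_avoid_target [simp]: "srw_avoid E r n r = 0"
  by (cases n) simp_all

locale bounded_harmonic =
  fixes E :: "'a \<Rightarrow> 'a \<Rightarrow> bool" and V :: "'a set" and r :: 'a and g :: "'a \<Rightarrow> real" and M :: real
  assumes closed: "\<And>x y. x \<in> V \<Longrightarrow> E x y \<Longrightarrow> y \<in> V"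
    and finite_neighbours: "\<And>x. x \<in> V \<Longrightarrow> x \<noteq> r \<Longrightarrow> finite {y. E x y}"
    and neighbours_nonempty: "\<And>x. x \<in> V \<Longrightarrow> x \<noteq> r \<Longrightarrow> {y. E x y} \<noteq> {}"
    and first_step: "\<And>x. x \<in> V \<Longrightarrow> x \<noteq> r \<Longrightarrow>
                       g x = 1 + (\<Sum>y\<in>{y. E x y}. g y) / card {y. E x y}"
    and target: "g r = 0"
    and bounds: "\<And>x. x \<in> V \<Longrightarrow> 0 \<le> g x \<and> g x \<le> M"
begin

lemma srw_avoid_Suc:
  assumes "x \<in> V" "x \<noteq> r"
  shows "srw_avoid E r (Suc n) x = (\<Sum>y\<in>{y. E x y}. srw_avoid E r n y) / card {y. E x y}"
  using assms by (simp add: expectation_srw_step[OF finite_neighbours neighbours_nonempty])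

lemma partial_sum_gap_bounds:
  assumes "x \<in> V"
  shows "0 \<le> g x - (\<Sum>n<N. srw_avoid E r n x) \<and> g x - (\<Sum>n<N. srw_avoid E r n x) \<le> M * srw_avoid E r N x"
  using assms
proof (induction N arbitrary: x)
  case 0
  then show ?case using bounds target by auto
next
  case (Suc N)
  show ?case
  proof (cases "x = r")
    case True
    then show ?thesis using target by simp
  next
    case False
    let ?S = "{y. E x y}"
    let ?gap = "\<lambda>y. g y - (\<Sum>n<N. srw_avoid E r n y)"
    have nbr: "y \<in> V" if "y \<in> ?S" for y using closed Suc.prems that by blast
    have "(\<Sum>n<Suc N. srw_avoid E r n x) = 1 + (\<Sum>n<N. srw_avoid E r (Suc n) x)"
      using False by (simp add: sum.lessThan_Suc_shift del: sum.lessThan_Suc)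
    also have "(\<Sum>n<N. srw_avoid E r (Suc n) x) = (\<Sum>y\<in>?S. \<Sum>n<N. srw_avoid E r n y) / card ?S"
      unfolding srw_avoid_Suc[OF Suc.prems False] sum_divide_distrib[symmetric]
      by (rule arg_cong[where f = "\<lambda>t. t / _"], rule sum.swap)
    finally have sums_shift: "(\<Sum>n<Suc N. srw_avoid E r n x)
        = 1 + (\<Sum>y\<in>?S. \<Sum>n<N. srw_avoid E r n y) / card ?S" .
    have gap_avg: "g x - (\<Sum>n<Suc N. srw_avoid E r n x) = (\<Sum>y\<in>?S. ?gap y) / card ?S"
      unfolding sums_shift first_step[OF Suc.prems False]
      by (simp add: sum_subtractf diff_divide_distrib)
    have "0 \<le> (\<Sum>y\<in>?S. ?gap y)"
      using Suc.IH nbr by (intro sum_nonneg) blast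
    moreover have "(\<Sum>y\<in>?S. ?gap y) \<le> M * (\<Sum>y\<in>?S. srw_avoid E r N y)"
      unfolding sum_distrib_left using Suc.IH nbr by (intro sum_mono) blast
    ultimately show ?thesis
      using gap_avg srw_avoid_Suc[OF Suc.prems False]
      by (simp add: divide_right_mono divide_nonneg_nonneg)
  qed
qed

lemma srw_avoid_sums:
  assumes "x \<in> V"
  shows "(\<lambda>n. srw_avoid E r n x) sums g x"
proof -
  have summable: "summable (\<lambda>n. srw_avoid E r n x)"
  proof (rule summableI_nonneg_bounded[where x = "g x"])
    show "(\<Sum>i<n. srw_avoid E r i x) \<le> g x" for n
      using partial_sum_gap_bounds[OF assms, of n] by linarith
  qed (rule srw_avoid_nonneg)
  have lim: "(\<lambda>n. M * srw_avoid E r n x) \<longlonglongrightarrow> 0"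
    using tendsto_mult_right_zero[OF summable_LIMSEQ_zero[OF summable]] .
  have "(\<lambda>N. g x - (\<Sum>n<N. srw_avoid E r n x)) \<longlonglongrightarrow> 0"
    by (rule real_tendsto_sandwich[OF _ _ tendsto_const lim])
       (use partial_sum_gap_bounds[OF assms] in auto)
  then have "(\<lambda>N. g x - (g x - (\<Sum>n<N. srw_avoid E r n x))) \<longlonglongrightarrow> g x - 0"
    by (rule tendsto_diff[OF tendsto_const])
  then show ?thesis by (simp add: sums_def)
qed

lemma hitting_time_eq:
  assumes "x \<in> V"
  shows "hitting_time E x r = ennreal (g x)"
proof -
  have "(\<Sum>n. ennreal (srw_avoid E r n x)) = ennreal (\<Sum>n. srw_avoid E r n x)"
    by (rule suminf_ennreal2[OF srw_avoid_nonneg sums_summable[OF srw_avoid_sums[OF assms]]])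
  then show ?thesis
    unfolding hitting_time_def sums_unique[OF srw_avoid_sums[OF assms], symmetric] .
qed

end

lemma f_poly_Suc_diff: "f_poly (Suc k) d - f_poly k d = 2 * (\<Sum>i\<le>k. d ^ i) - 1"
proof -
  have "(\<Sum>i<Suc k. (2 * real (Suc k) - 2 * real i) * d ^ i)
      = (\<Sum>i<Suc k. (2 * real k - 2 * real i) * d ^ i) + 2 * (\<Sum>i<Suc k. d ^ i)"
    by (simp add: sum.distrib[symmetric] sum_distrib_left algebra_simps)
  moreover have "(\<Sum>i<Suc k. (2 * real k - 2 * real i) * d ^ i) = (\<Sum>i<k. (2 * real k - 2 * real i) * d ^ i)"
    by simp
  ultimately show ?thesis by (simp add: f_poly_def lessThan_Suc_atMost)
qed

lemma f_poly_recurrence: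
  "f_poly (Suc (Suc k)) d + d * f_poly k d = (d + 1) * (f_poly (Suc k) d + 1)"
proof -
  have "(\<Sum>i\<le>Suc k. d ^ i) = 1 + d * (\<Sum>i\<le>k. d ^ i)"
    by (subst sum.atMost_Suc_shift) (simp add: sum_distrib_left)
  then show ?thesis
    using f_poly_Suc_diff[of "Suc k" d] f_poly_Suc_diff[of k d] by algebra
qed

lemma f_poly_mono:
  assumes "d \<ge> 0" "k \<le> m"
  shows "f_poly k d \<le> f_poly m d"
  using assms(2)
proof (induction m rule: dec_induct)
  case (step m)
  have "1 \<le> (\<Sum>i\<le>m. d ^ i)"
    using member_le_sum[of 0 "{..m}" "\<lambda>i. d ^ i"] assms(1) by simp
  then show ?case using step.IH f_poly_Suc_diff[of m d] by simp
qed simp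

lemma f_poly_nonneg: "d \<ge> 0 \<Longrightarrow> 0 \<le> f_poly k d"
  using f_poly_mono[of d 0 k] by (simp add: f_poly_def)

lemma tree_neighbours:
  assumes "x \<in> tree_verts d h" "x \<noteq> []"
  shows "{y. tree_adj d h x y}
           = insert (butlast x) (if length x < h then (\<lambda>i. x @ [i]) ` {..<d} else {})"
proof -
  have "x = butlast x @ [last x]" using assms(2) by simp
  moreover have "butlast x \<in> tree_verts d h"
    using assms(1) by (auto simp: tree_verts_def dest: in_set_butlastD)
  ultimately show ?thesis
    using assms(1) by (auto simp: tree_adj_def tree_verts_def split: if_splits)
qed

lemma tree_neighbours_inner:
  fixes G :: "nat \<Rightarrow> real"
  assumes "x \<in> tree_verts d h" "x \<noteq> []" "length x < h"
  shows "card {y. tree_adj d h x y} = Suc d"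
    and "(\<Sum>y\<in>{y. tree_adj d h x y}. G (length y)) = G (length x - 1) + real d * G (Suc (length x))"
proof -
  have parent_not_child: "butlast x \<notin> (\<lambda>i. x @ [i]) ` {..<d}"
    using assms(2) by (auto dest!: arg_cong[where f = length])
  have inj: "inj_on (\<lambda>i. x @ [i]) {..<d}" by (auto simp: inj_on_def)
  have nbrs: "{y. tree_adj d h x y} = insert (butlast x) ((\<lambda>i. x @ [i]) ` {..<d})"
    using tree_neighbours[OF assms(1,2)] assms(3) by simp
  show "card {y. tree_adj d h x y} = Suc d"
    unfolding nbrs using parent_not_child inj by (simp add: card_image)
  show "(\<Sum>y\<in>{y. tree_adj d h x y}. G (length y)) = G (length x - 1) + real d * G (Suc (length x))"
    unfolding nbrs using parent_not_child inj by (simp add: sum.reindex)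
qed

definition tree_root_hitting_time :: "nat \<Rightarrow> nat \<Rightarrow> nat \<Rightarrow> real" where
  "tree_root_hitting_time d h m = f_poly h (real d) - f_poly (h - m) (real d)"

lemma tree_root_hitting_time_bounds:
  "0 \<le> tree_root_hitting_time d h m \<and> tree_root_hitting_time d h m \<le> f_poly h (real d)"
  using f_poly_mono[of "real d" "h - m" h] f_poly_nonneg[of "real d" "h - m"]
  by (simp add: tree_root_hitting_time_def)

lemma tree_root_hitting_time_first_step:
  fixes d h :: nat
  defines "G \<equiv> tree_root_hitting_time d h"
  assumes x: "x \<in> tree_verts d h" "x \<noteq> []"
  shows "G (length x) = 1 + (\<Sum>y\<in>{y. tree_adj d h x y}. G (length y)) / card {y. tree_adj d h x y}"
proof (cases "length x < h")
  case True
  obtain k where k: "h - length x = Suc k" using True by (metis Suc_diff_Suc)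
  have "0 < length x" using x(2) by simp
  then have "h - (length x - 1) = Suc (Suc k)" "h - Suc (length x) = k"
    using k by arith+
  then have "(\<Sum>y\<in>{y. tree_adj d h x y}. G (length y)) / card {y. tree_adj d h x y}
      = (f_poly h d - f_poly (Suc (Suc k)) d + real d * (f_poly h d - f_poly k d)) / (real d + 1)"
    using tree_neighbours_inner(1)[OF x True] tree_neighbours_inner(2)[OF x True, of G]
    by (simp add: G_def tree_root_hitting_time_def)
  also have "\<dots> = f_poly h d - f_poly (Suc k) d - 1"
    using f_poly_recurrence[of k "real d"] by (simp add: field_simps)
  finally show ?thesis by (simp add: G_def tree_root_hitting_time_def k)
next
  case False
  then have leaf: "length x = h" using x(1) by (simp add: tree_verts_def)
  then have "{y. tree_adj d h x y} = {butlast x}"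
    using tree_neighbours[OF x] by simp
  moreover have "h - length x = 0" "h - length (butlast x) = 1"
    using leaf x(2) by (auto simp: Suc_le_eq)
  moreover have "f_poly 0 (real d) = 0" "f_poly 1 (real d) = 1"
    by (simp_all add: f_poly_def)
  ultimately show ?thesis by (simp add: G_def tree_root_hitting_time_def)
qed

theorem mainTheorem7:
  fixes d h l :: nat and x :: "nat list"
  assumes "d \<ge> 1" and "h \<ge> 1" and "l \<le> h"
    and "x \<in> tree_verts d h" and "length x = l"
  shows "hitting_time (tree_adj d h) x [] = ennreal (f_poly h (real d) - f_poly (h - l) (real d))"
proof -
  interpret bounded_harmonic "tree_adj d h" "tree_verts d h" "[]"
    "\<lambda>y. tree_root_hitting_time d h (length y)" "f_poly h (real d)"
  proof
    fix z assume z: "z \<in> tree_verts d h" "z \<noteq> []"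
    show "finite {y. tree_adj d h z y}" "{y. tree_adj d h z y} \<noteq> {}"
      using tree_neighbours[OF z] by simp_all
    show "tree_root_hitting_time d h (length z)
        = 1 + (\<Sum>y\<in>{y. tree_adj d h z y}. tree_root_hitting_time d h (length y))
              / card {y. tree_adj d h z y}"
      by (rule tree_root_hitting_time_first_step[OF z])
  qed (simp_all add: tree_adj_def tree_root_hitting_time_bounds,
       simp add: tree_root_hitting_time_def)
  show ?thesis
    using hitting_time_eq[OF assms(4)] assms(5) by (simp add: tree_root_hitting_time_def)
qed

end
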